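(* $\mathcal{S}pl\leq_{K}\mathrm{tr}(\mathcal{E})$ and $\mathcal{S}pl\leq_{K}\mathcal{F}in\times\mathcal{F}in$.
   Context: For an infinite $A\subseteq\omega$, let $S(A)$ be the set of all $\sigma\in2^{<\omega}$ such that $\sigma$ is constant on $A\cap\mathrm{dom}(\sigma)$. The splitting ideal $\mathcal{S}pl$ is the ideal on $2^{<\omega}$ generated by the sets $S(A)$, $A\in[\omega]^{\omega}$. $\mathcal{E}$ is the $\sigma$-ideal on $2^\omega$ generated by closed sets of Lebesgue measure zero. $\mathrm{tr}(\mathcal{E})$ is the ideal on $2^{<\omega}$ consisting of those $A\subseteq2^{<\omega}$ such that $\{x\in2^{\omega}:x|_{n}\in A$ for infinitely many $n\}\in\mathcal{E}$. $\mathcal{F}in\times\mathcal{F}in$ is the ideal on $\omega\times\omega$ of sets $A$ such that for all but finitely many $n$ the set $\{m:(n,m)\in A\}$ is finite. For ideals $\mathcal{J}_0,\mathcal{J}_1$ on countable sets $X_0,X_1$, $\mathcal{J}_{0}\leq_{K}\mathcal{J}_{1}$ (Katětov reducibility) means there is a function $\pi:X_1\rightarrow X_0$ with $\pi^{-1}[A]\in\mathcal{J}_{1}$ for every $A\in\mathcal{J}_{0}$. *)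

theory Defs
  imports "HOL-Probability.Probability"
begin

text \<open>Finite binary sequences (elements of 2^{<omega}) are modelled as bool lists;
  dom sigma = {0..<length sigma}. Infinite binary sequences (2^omega) are nat => bool,
  carrying the product topology (bool has the discrete order topology).\<close>

definition S_set :: "nat set \<Rightarrow> bool list set" where
  "S_set A = {\<sigma>. \<exists>c. \<forall>n\<in>A. n < length \<sigma> \<longrightarrow> \<sigma> ! n = c}"

definition Spl :: "bool list set set" where
  "Spl = {X. \<exists>F. finite F \<and> F \<subseteq> {S_set A | A. infinite A} \<and> X \<subseteq> \<Union>F}"

definition cantor_measure :: "(nat \<Rightarrow> bool) measure" where
  "cantor_measure = PiM UNIV (\<lambda>_. measure_pmf (bernoulli_pmf (1/2)))"

definition E_ideal :: "(nat \<Rightarrow> bool) set set" where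
  "E_ideal = {X. \<exists>C :: nat \<Rightarrow> (nat \<Rightarrow> bool) set.
      (\<forall>i. closed (C i) \<and> C i \<in> sets cantor_measure \<and> emeasure cantor_measure (C i) = 0)
      \<and> X \<subseteq> (\<Union>i. C i)}"

definition restr :: "(nat \<Rightarrow> bool) \<Rightarrow> nat \<Rightarrow> bool list" where
  "restr x n = map x [0..<n]"

definition trE :: "bool list set set" where
  "trE = {A. {x. infinite {n. restr x n \<in> A}} \<in> E_ideal}"

definition FinFin :: "(nat \<times> nat) set set" where
  "FinFin = {A. finite {n. infinite {m. (n, m) \<in> A}}}"

definition katetov_le :: "'a set set \<Rightarrow> 'b set set \<Rightarrow> bool" where
  "katetov_le J0 J1 \<longleftrightarrow> (\<exists>\<pi> :: 'b \<Rightarrow> 'a. \<forall>A\<in>J0. \<pi> -` A \<in> J1)"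

end

theory Submission imports Defs begin

text \<open>A branch x of 2^{<omega} passes through S(A) infinitely often only if x is constant
  on A, and the set of such x is the union of two closed sets of measure
  lim (1/2)^k = 0; so the identity map witnesses Spl \<le>K tr(E). For Fin x Fin send
  (n, m) to the initial segment of length m of the characteristic function of {..<n}: that
  function is constant on an infinite A only if n \<le> min A, so only finitely many columns
  of a preimage of S(A) are infinite.\<close>

definition is_ideal :: "'a set set \<Rightarrow> bool" where
  "is_ideal J \<longleftrightarrow> {} \<in> J \<and> (\<forall>X\<in>J. \<forall>Y\<subseteq>X. Y \<in> J) \<and> (\<forall>X\<in>J. \<forall>Y\<in>J. X \<union> Y \<in> J)"

lemma is_idealI:
  assumes "{} \<in> J" and "\<And>X Y. X \<in> J \<Longrightarrow> Y \<subseteq> X \<Longrightarrow> Y \<in> J"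
    and "\<And>X Y. X \<in> J \<Longrightarrow> Y \<in> J \<Longrightarrow> X \<union> Y \<in> J"
  shows "is_ideal J"
  using assms unfolding is_ideal_def by blast

lemma is_ideal_empty: "is_ideal J \<Longrightarrow> {} \<in> J"
  by (simp add: is_ideal_def)

lemma is_ideal_subset: "is_ideal J \<Longrightarrow> X \<in> J \<Longrightarrow> Y \<subseteq> X \<Longrightarrow> Y \<in> J"
  by (simp add: is_ideal_def)

lemma is_ideal_Un: "is_ideal J \<Longrightarrow> X \<in> J \<Longrightarrow> Y \<in> J \<Longrightarrow> X \<union> Y \<in> J"
  by (simp add: is_ideal_def)

lemma is_ideal_Union:
  assumes "is_ideal J" "finite F" "F \<subseteq> J"
  shows "\<Union>F \<in> J"
  using assms(2,3) by induction (auto intro: is_ideal_empty is_ideal_Un assms(1))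

lemma katetov_le_SplI:
  assumes "is_ideal J" and gen: "\<And>A. infinite A \<Longrightarrow> \<pi> -` S_set A \<in> J"
  shows "katetov_le Spl J"
  unfolding katetov_le_def
proof (intro exI ballI)
  fix X assume "X \<in> Spl"
  then obtain F where F: "finite F" "F \<subseteq> {S_set A | A. infinite A}" "X \<subseteq> \<Union>F"
    unfolding Spl_def by blast
  have "\<Union>(vimage \<pi> ` F) \<in> J"
    using F(1,2) gen by (intro is_ideal_Union[OF assms(1)]) auto
  moreover have "\<pi> -` X \<subseteq> \<Union>(vimage \<pi> ` F)"
    using F(3) by blast
  ultimately show "\<pi> -` X \<in> J"
    by (rule is_ideal_subset[OF assms(1)])
qed

lemma prob_space_cantor_measure: "prob_space cantor_measure"
  unfolding cantor_measure_def
  by (simp add: prob_space_PiM prob_space_measure_pmf)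

lemma space_cantor_measure: "space cantor_measure = UNIV"
  by (simp add: cantor_measure_def space_PiM)

lemma sets_cantor_measure_agree_on:
  "{x. \<forall>a\<in>A. x a = y a} \<in> sets cantor_measure"
proof -
  have coord: "{x. x a = y a} \<in> sets cantor_measure" for a
  proof -
    have "(\<lambda>x. x a) \<in> measurable cantor_measure (measure_pmf (bernoulli_pmf (1/2)))"
      unfolding cantor_measure_def by (rule measurable_component_singleton) simp
    then have "(\<lambda>x. x a) -` {y a} \<inter> space cantor_measure \<in> sets cantor_measure"
      by (rule measurable_sets) simp
    then show ?thesis
      by (simp add: space_cantor_measure vimage_def)
  qed
  have "{x. \<forall>a\<in>A. x a = y a} = (\<Inter>a\<in>A. {x. x a = y a})"
    by auto
  also have "\<dots> \<in> sets cantor_measure"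
    using coord sets.top[of cantor_measure] by (intro sets.countable_INT'') (auto simp: space_cantor_measure)
  finally show ?thesis .
qed

lemma closed_agree_on: "closed {x :: nat \<Rightarrow> bool. \<forall>a\<in>A. x a = y a}"
proof -
  have "closed ((\<lambda>x :: nat \<Rightarrow> bool. x a) -` {y a})" for a
    by (rule closed_vimage) (auto intro: continuous_on_product_coordinates)
  moreover have "{x :: nat \<Rightarrow> bool. \<forall>a\<in>A. x a = y a} = (\<Inter>a\<in>A. (\<lambda>x. x a) -` {y a})"
    by auto
  ultimately show ?thesis by auto
qed

lemma emeasure_cantor_agree_on_finite:
  assumes "finite J"
  shows "emeasure cantor_measure {x. \<forall>a\<in>J. x a = y a} = ennreal ((1/2) ^ card J)"
proof -
  interpret product_prob_space "\<lambda>_. measure_pmf (bernoulli_pmf (1/2))" UNIV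
    by (intro product_prob_spaceI prob_space_measure_pmf)
  have "{x. \<forall>a\<in>J. x a = y a} =
      prod_emb UNIV (\<lambda>_. measure_pmf (bernoulli_pmf (1/2))) J (Pi\<^sub>E J (\<lambda>a. {y a}))"
    by (auto simp: prod_emb_def space_PiM PiE_iff restrict_def fun_eq_iff)
  then have "emeasure cantor_measure {x. \<forall>a\<in>J. x a = y a} =
      (\<Prod>a\<in>J. emeasure (measure_pmf (bernoulli_pmf (1/2))) {y a})"
    unfolding cantor_measure_def using assms by (simp add: emeasure_PiM_emb)
  also have "\<dots> = (\<Prod>a\<in>J. ennreal (1/2))"
    by (intro prod.cong refl) (simp add: emeasure_pmf_single split: split_indicator)
  finally show ?thesis
    by (simp only: prod_constant ennreal_power)
qed

lemma emeasure_cantor_agree_on_infinite: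
  assumes "infinite A"
  shows "emeasure cantor_measure {x. \<forall>a\<in>A. x a = y a} = 0"
proof -
  interpret prob_space cantor_measure
    by (rule prob_space_cantor_measure)
  let ?C = "{x. \<forall>a\<in>A. x a = y a}"
  have le: "measure cantor_measure ?C \<le> (1/2) ^ k" for k
  proof -
    obtain J where J: "J \<subseteq> A" "finite J" "card J = k"
      using infinite_arbitrarily_large[OF assms] by blast
    then have "measure cantor_measure ?C \<le> measure cantor_measure {x. \<forall>a\<in>J. x a = y a}"
      by (intro finite_measure_mono sets_cantor_measure_agree_on) auto
    also have "\<dots> = (1/2) ^ k"
      using emeasure_cantor_agree_on_finite[OF \<open>finite J\<close>, of y] J(3)
      by (simp add: emeasure_eq_measure)
    finally show ?thesis .
  qed
  have "measure cantor_measure ?C \<le> 0"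
    using le by (intro LIMSEQ_le_const[OF LIMSEQ_power_zero[of "1/2::real"]]) auto
  then show ?thesis
    by (simp add: emeasure_eq_measure measure_le_0_iff)
qed

lemma E_idealI:
  assumes "closed C" "C \<in> sets cantor_measure" "emeasure cantor_measure C = 0"
  shows "C \<in> E_ideal"
  using assms unfolding E_ideal_def by (intro CollectI exI[of _ "\<lambda>_. C"]) auto

lemma E_ideal_mono: "X \<in> E_ideal \<Longrightarrow> Y \<subseteq> X \<Longrightarrow> Y \<in> E_ideal"
  unfolding E_ideal_def by blast

lemma E_ideal_UN:
  fixes X :: "nat \<Rightarrow> (nat \<Rightarrow> bool) set"
  assumes "\<And>i. X i \<in> E_ideal"
  shows "(\<Union>i. X i) \<in> E_ideal"
proof -
  have "\<forall>i. \<exists>Ci :: nat \<Rightarrow> (nat \<Rightarrow> bool) set.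
      (\<forall>j. closed (Ci j) \<and> Ci j \<in> sets cantor_measure \<and> emeasure cantor_measure (Ci j) = 0)
      \<and> X i \<subseteq> (\<Union>j. Ci j)"
    using assms unfolding E_ideal_def by blast
  from choice[OF this] obtain C :: "nat \<Rightarrow> nat \<Rightarrow> (nat \<Rightarrow> bool) set" where
    C_null: "\<And>i j. closed (C i j) \<and> C i j \<in> sets cantor_measure \<and> emeasure cantor_measure (C i j) = 0"
    and C_cover: "\<And>i. X i \<subseteq> (\<Union>j. C i j)"
    by blast
  define D where "D n = C (fst (prod_decode n)) (snd (prod_decode n))" for n
  have "closed (D n) \<and> D n \<in> sets cantor_measure \<and> emeasure cantor_measure (D n) = 0" for n
    unfolding D_def by (rule C_null)
  moreover have "(\<Union>i. X i) \<subseteq> (\<Union>n. D n)"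
  proof
    fix x assume "x \<in> (\<Union>i. X i)"
    then obtain i j where "x \<in> C i j"
      using C_cover by blast
    then have "x \<in> D (prod_encode (i, j))"
      by (simp add: D_def)
    then show "x \<in> (\<Union>n. D n)"
      by blast
  qed
  ultimately show ?thesis
    unfolding E_ideal_def by blast
qed

lemma is_ideal_E_ideal: "is_ideal E_ideal"
proof (rule is_idealI)
  show "{} \<in> E_ideal"
    by (rule E_idealI) auto
  show "X \<union> Y \<in> E_ideal" if "X \<in> E_ideal" "Y \<in> E_ideal" for X Y
  proof (rule E_ideal_mono)
    show "(\<Union>i::nat. if i = 0 then X else Y) \<in> E_ideal"
      using that by (intro E_ideal_UN) simp
    show "X \<union> Y \<subseteq> (\<Union>i::nat. if i = 0 then X else Y)"
      by (intro Un_least UN_upper[of 0, simplified] UN_upper[of 1, simplified]) auto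
  qed
qed (rule E_ideal_mono)

lemma E_ideal_agree_on_infinite:
  assumes "infinite A"
  shows "{x. \<forall>a\<in>A. x a = y a} \<in> E_ideal"
  by (rule E_idealI[OF closed_agree_on sets_cantor_measure_agree_on
        emeasure_cantor_agree_on_infinite[OF assms]])

lemma is_ideal_trE: "is_ideal trE"
proof (rule is_idealI)
  show "{} \<in> trE"
    using is_ideal_empty[OF is_ideal_E_ideal] by (simp add: trE_def)
  show "Y \<in> trE" if "X \<in> trE" "Y \<subseteq> X" for X Y
  proof -
    have "{x. infinite {n. restr x n \<in> Y}} \<subseteq> {x. infinite {n. restr x n \<in> X}}"
      using \<open>Y \<subseteq> X\<close> by (auto elim!: infinite_super[rotated])
    then show ?thesis
      using \<open>X \<in> trE\<close> E_ideal_mono unfolding trE_def by blast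
  qed
  show "X \<union> Y \<in> trE" if "X \<in> trE" "Y \<in> trE" for X Y
  proof -
    have "{x. infinite {n. restr x n \<in> X \<union> Y}} =
        {x. infinite {n. restr x n \<in> X}} \<union> {x. infinite {n. restr x n \<in> Y}}"
      by (auto simp: Collect_disj_eq)
    then show ?thesis
      using that is_ideal_Un[OF is_ideal_E_ideal] unfolding trE_def by simp
  qed
qed

lemma is_ideal_FinFin: "is_ideal FinFin"
proof (rule is_idealI)
  show "{} \<in> FinFin"
    by (simp add: FinFin_def)
  show "Y \<in> FinFin" if "X \<in> FinFin" "Y \<subseteq> X" for X Y
  proof -
    have "{n. infinite {m. (n, m) \<in> Y}} \<subseteq> {n. infinite {m. (n, m) \<in> X}}"
      using \<open>Y \<subseteq> X\<close> by (auto elim!: infinite_super[rotated])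
    then show ?thesis
      using \<open>X \<in> FinFin\<close> finite_subset unfolding FinFin_def by blast
  qed
  show "X \<union> Y \<in> FinFin" if "X \<in> FinFin" "Y \<in> FinFin" for X Y
  proof -
    have "{n. infinite {m. (n, m) \<in> X \<union> Y}} =
        {n. infinite {m. (n, m) \<in> X}} \<union> {n. infinite {m. (n, m) \<in> Y}}"
      by (auto simp: Collect_disj_eq)
    then show ?thesis
      using that unfolding FinFin_def by simp
  qed
qed

lemma restr_in_S_set_iff: "restr x n \<in> S_set A \<longleftrightarrow> (\<exists>c. \<forall>a\<in>A. a < n \<longrightarrow> x a = c)"
  by (simp add: S_set_def restr_def)

lemma constant_on_if_infinite_restr_in_S_set:
  assumes "infinite {n. restr x n \<in> S_set A}"
  shows "\<exists>c. \<forall>a\<in>A. x a = c"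
proof (cases "A = {}")
  case False
  then obtain a0 where "a0 \<in> A" by blast
  have "x a = x a0" if "a \<in> A" for a
  proof -
    obtain n where "n > max a a0" "restr x n \<in> S_set A"
      using assms unfolding infinite_nat_iff_unbounded by blast
    with \<open>a \<in> A\<close> \<open>a0 \<in> A\<close> show ?thesis
      unfolding restr_in_S_set_iff by fastforce
  qed
  then show ?thesis by blast
qed simp

lemma katetov_le_Spl_trE: "katetov_le Spl trE"
proof (rule katetov_le_SplI[OF is_ideal_trE, where \<pi> = id])
  fix A :: "nat set" assume "infinite A"
  have "{x. infinite {n. restr x n \<in> S_set A}} \<subseteq>
      {x. \<forall>a\<in>A. x a = True} \<union> {x. \<forall>a\<in>A. x a = False}"
  proof
    fix x assume "x \<in> {x. infinite {n. restr x n \<in> S_set A}}"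
    then obtain c where "\<forall>a\<in>A. x a = c"
      using constant_on_if_infinite_restr_in_S_set by blast
    then show "x \<in> {x. \<forall>a\<in>A. x a = True} \<union> {x. \<forall>a\<in>A. x a = False}"
      by (cases c) auto
  qed
  moreover have "{x. \<forall>a\<in>A. x a = True} \<union> {x. \<forall>a\<in>A. x a = False} \<in> E_ideal"
    using E_ideal_agree_on_infinite[OF \<open>infinite A\<close>] by (intro is_ideal_Un[OF is_ideal_E_ideal])
  ultimately show "id -` S_set A \<in> trE"
    unfolding trE_def using E_ideal_mono by auto
qed

lemma katetov_le_Spl_FinFin: "katetov_le Spl FinFin"
proof (rule katetov_le_SplI[OF is_ideal_FinFin, where \<pi> = "\<lambda>(n, m). restr (\<lambda>i. i < n) m"])
  fix A :: "nat set" assume "infinite A"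
  then obtain a0 where "a0 \<in> A"
    using infinite_imp_nonempty by blast
  have "n \<le> a0" if column: "infinite {m. restr (\<lambda>i. i < n) m \<in> S_set A}" for n
  proof -
    obtain c where c: "\<forall>a\<in>A. (a < n) = c"
      using constant_on_if_infinite_restr_in_S_set[OF column] by blast
    obtain a where "a \<in> A" "n \<le> a"
      using \<open>infinite A\<close> by (metis infinite_nat_iff_unbounded_le)
    with c \<open>a0 \<in> A\<close> show ?thesis
      by (metis not_le)
  qed
  then have "{n. infinite {m. (n, m) \<in> (\<lambda>(n, m). restr (\<lambda>i. i < n) m) -` S_set A}} \<subseteq> {..a0}"
    by auto
  then show "(\<lambda>(n, m). restr (\<lambda>i. i < n) m) -` S_set A \<in> FinFin"
    unfolding FinFin_def using finite_subset by blast
qed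

theorem mainTheorem6:
  shows "katetov_le Spl trE \<and> katetov_le Spl FinFin"
  using katetov_le_Spl_trE katetov_le_Spl_FinFin by blast

end
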